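(* Let $L>0$, $\mu\le0$, $\kappa:=\mu/L$, $\bar h(\kappa):=\frac{3}{1+\kappa+\sqrt{1-\kappa+\kappa^2}}$, and $\bar\kappa:=\frac{-9-5\sqrt5+\sqrt{190+90\sqrt5}}{4}\approx-0.1001$. Define on $(0,\bar h(\kappa)]$ $$p(h,\kappa)=\begin{cases}2h-h^2\frac{-\kappa}{1-\kappa}, & h\in(0,1],\\[2pt] \frac{h(2-h)(2-\kappa h)}{2-(1+\kappa)h}, & h\in[1,\bar h(\kappa)].\end{cases}$$ Then the step size $h_*$ maximizing $h\mapsto p(h,\kappa)$ over $(0,\bar h(\kappa)]$ (equivalently, minimizing the worst-case bound $\frac{2L[f(x_0)-f_*]}{1+Np(h,\kappa)}$ for the gradient method with constant step $h/L$ on $f\in\mathcal{F}_{\mu,L}$) is $$h_*(\kappa)=\begin{cases}h_{\mathrm{opt}}, & \kappa\le\bar\kappa,\\ \bar h(\kappa), & \bar\kappa<\kappa\le0,\end{cases}$$ where $h_{\mathrm{opt}}$ is the unique solution in $[1,\bar h(\kappa)]$ of $$-\kappa(1+\kappa)h^3+\big[3\kappa+(1+\kappa)^2\big]h^2-4(1+\kappa)h+4=0.$$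
   Context: For $L>0$ and $\mu\le L$, $\mathcal{F}_{\mu,L}(\mathbb{R}^d)$ denotes the class of differentiable functions $f:\mathbb{R}^d\to\mathbb{R}$ such that both $\frac L2\|\cdot\|^2-f$ and $f-\frac{\mu}{2}\|\cdot\|^2$ are convex. *)

theory Defs
  imports "HOL-Analysis.Analysis"
begin

definition hbar :: "real \<Rightarrow> real" where
  "hbar \<kappa> = 3 / (1 + \<kappa> + sqrt (1 - \<kappa> + \<kappa>^2))"

definition kappabar :: real where
  "kappabar = (-9 - 5 * sqrt 5 + sqrt (190 + 90 * sqrt 5)) / 4"

text \<open>The piecewise function p(h,kappa); both branches agree at h = 1.\<close>
definition pfun :: "real \<Rightarrow> real \<Rightarrow> real" where
  "pfun h \<kappa> = (if h \<le> 1 then 2 * h - h^2 * ((- \<kappa>) / (1 - \<kappa>))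
                 else h * (2 - h) * (2 - \<kappa> * h) / (2 - (1 + \<kappa>) * h))"

definition hopt_poly :: "real \<Rightarrow> real \<Rightarrow> real" where
  "hopt_poly \<kappa> h = - \<kappa> * (1 + \<kappa>) * h^3 + (3 * \<kappa> + (1 + \<kappa>)^2) * h^2
                     - 4 * (1 + \<kappa>) * h + 4"

definition hopt :: "real \<Rightarrow> real" where
  "hopt \<kappa> = (THE h. h \<in> {1..hbar \<kappa>} \<and> hopt_poly \<kappa> h = 0)"

definition hstar :: "real \<Rightarrow> real" where
  "hstar \<kappa> = (if \<kappa> \<le> kappabar then hopt \<kappa> else hbar \<kappa>)"

end

theory Submission
  imports Defs
begin

(* On [1, hbar \<kappa>] the second branch of p has derivative 2 hopt_poly(\<kappa>, h) / (2 - (1 + \<kappa>) h)^2.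
   There hbar_poly \<kappa> stays nonnegative (hbar \<kappa> is its root greater than 1), which forces
   hopt_poly \<kappa> to decrease strictly from hopt_poly(\<kappa>, 1) = 1; the first branch stays below p(1, \<kappa>)
   on (0, 1). So p has a strict maximum at the zero of hopt_poly \<kappa> in [1, hbar \<kappa>] if
   hopt_poly(\<kappa>, hbar \<kappa>) <= 0, and at hbar \<kappa> otherwise. As hbar_poly(\<kappa>, hbar \<kappa>) = 0, we get
   hopt_poly(\<kappa>, hbar \<kappa>) = -(u^2 - 5u + 5) with u = (1 + \<kappa>) hbar \<kappa>, which is nonpositive iff
   2u <= 5 - sqrt 5; after squaring this reads 2\<kappa>^2 + (9 + 5 sqrt 5)\<kappa> + 2 <= 0, and kappabar is the
   larger root of that quadratic. *)

definition hbar_poly :: "real \<Rightarrow> real \<Rightarrow> real" where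
  "hbar_poly \<kappa> h = \<kappa> * h^2 - 2 * (1 + \<kappa>) * h + 3"

lemma one_minus_plus_sq_pos: "0 < 1 - \<kappa> + (\<kappa>::real)^2"
proof -
  have "1 - \<kappa> + \<kappa>^2 = (\<kappa> - 1/2)^2 + 3/4" by (simp add: power2_eq_square algebra_simps)
  moreover have "0 \<le> (\<kappa> - 1/2)^2" by simp
  ultimately show ?thesis by linarith
qed

lemma hbar_denominator_pos: "0 < 1 + \<kappa> + sqrt (1 - \<kappa> + \<kappa>^2)"
proof (cases "0 < 1 + \<kappa>")
  case False
  then have "(-(1 + \<kappa>))^2 < 1 - \<kappa> + \<kappa>^2" by (simp add: power2_eq_square algebra_simps)
  then show ?thesis using real_less_rsqrt by fastforce
qed (simp add: add_pos_nonneg one_minus_plus_sq_pos less_imp_le)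

lemma hbar_poly_hbar: "hbar_poly \<kappa> (hbar \<kappa>) = 0"
proof -
  define s where "s = sqrt (1 - \<kappa> + \<kappa>^2)"
  define d where "d = 1 + \<kappa> + s"
  have s2: "s^2 = 1 - \<kappa> + \<kappa>^2" unfolding s_def using one_minus_plus_sq_pos[of \<kappa>] by simp
  have "d > 0" unfolding d_def s_def by (rule hbar_denominator_pos)
  then have "hbar_poly \<kappa> (3 / d) = (9 * \<kappa> - 6 * (1 + \<kappa>) * d + 3 * d^2) / d^2"
    unfolding hbar_poly_def by (simp add: field_simps power2_eq_square)
  also have "9 * \<kappa> - 6 * (1 + \<kappa>) * d + 3 * d^2 = 3 * (s^2 - (1 - \<kappa> + \<kappa>^2))"
    unfolding d_def by (simp add: power2_eq_square algebra_simps)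
  finally have "hbar_poly \<kappa> (3 / d) = 0" by (simp add: s2)
  then show ?thesis by (simp add: hbar_def d_def s_def)
qed

lemma one_less_hbar:
  assumes "\<kappa> < 1" shows "1 < hbar \<kappa>"
proof -
  have "sqrt (1 - \<kappa> + \<kappa>^2) < 2 - \<kappa>"
    using assms by (intro real_less_lsqrt) (auto simp: power2_eq_square algebra_simps)
  then show ?thesis using hbar_denominator_pos[of \<kappa>] by (simp add: hbar_def field_simps)
qed

lemma hbar_poly_nonneg:
  assumes "\<kappa> \<le> 0" "1 \<le> h" "h \<le> hbar \<kappa>"
  shows "0 \<le> hbar_poly \<kappa> h"
proof -
  have "hbar_poly \<kappa> h = hbar_poly \<kappa> h - hbar_poly \<kappa> (hbar \<kappa>)" by (simp add: hbar_poly_hbar)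
  also have "\<dots> = (hbar \<kappa> - h) * (2 - \<kappa> * (h + hbar \<kappa> - 2))"
    unfolding hbar_poly_def by (simp add: power2_eq_square algebra_simps)
  also have "\<dots> \<ge> 0"
  proof -
    have "\<kappa> * (h + hbar \<kappa> - 2) \<le> 0" using assms by (intro mult_nonpos_nonneg) auto
    then show ?thesis using assms by simp
  qed
  finally show ?thesis .
qed

lemma hbar_poly_nonneg_imp_le:
  assumes "\<kappa> \<le> 0" "0 \<le> hbar_poly \<kappa> h"
  shows "(1 + \<kappa>) * h \<le> 3/2"
proof -
  have "\<kappa> * h^2 \<le> 0" using assms(1) by (simp add: mult_nonpos_nonneg)
  then show ?thesis using assms(2) unfolding hbar_poly_def by linarith
qed

lemma hopt_poly_1: "hopt_poly \<kappa> 1 = 1"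
  unfolding hopt_poly_def by (simp add: power2_eq_square algebra_simps)

lemma hopt_poly_via_hbar_poly:
  "hopt_poly \<kappa> h = (3 - (1 + \<kappa>) * h) * hbar_poly \<kappa> h - ((1 + \<kappa>) * h)^2 + 5 * ((1 + \<kappa>) * h) - 5"
  unfolding hopt_poly_def hbar_poly_def by (simp add: power2_eq_square power3_eq_cube algebra_simps)

lemma hopt_poly_has_real_derivative:
  "(hopt_poly \<kappa> has_real_derivative
     (-3 * \<kappa> * (1 + \<kappa>) * h^2 + 2 * (3 * \<kappa> + (1 + \<kappa>)^2) * h - 4 * (1 + \<kappa>))) (at h)"
  unfolding hopt_poly_def [abs_def]
  by (rule derivative_eq_intros refl | simp add: power2_eq_square algebra_simps)+

lemma hopt_poly_derivative_neg:
  fixes \<kappa> h :: real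
  assumes "\<kappa> \<le> 0" "1 \<le> h" "0 \<le> hbar_poly \<kappa> h"
  shows "-3 * \<kappa> * (1 + \<kappa>) * h^2 + 2 * (3 * \<kappa> + (1 + \<kappa>)^2) * h - 4 * (1 + \<kappa>) < 0"
proof -
  \<comment> \<open>In these variables minus the derivative is hbar_poly plus terms that are nonnegative
    as soon as 1 + m - 2t is, and hbar_poly \<kappa> h \<ge> 0 forces that.\<close>
  define m t where "m = -\<kappa>" and "t = h - 1"
  have m: "0 \<le> m" and t: "0 \<le> t" using assms by (auto simp: m_def t_def)
  have \<kappa>h: "\<kappa> = -m" "h = 1 + t" by (auto simp: m_def t_def)
  have Q: "0 \<le> 1 + m - 2 * t - m * t^2"
    using assms(3) unfolding hbar_poly_def \<kappa>h by (simp add: power2_eq_square algebra_simps)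
  moreover have "0 \<le> m * t^2" using m by simp
  ultimately have "0 \<le> 1 + m - 2 * t" by linarith
  then have "0 \<le> m * t * (1 + m - 2 * t)" using m t by simp
  moreover have "0 < (m + 1)^2 + 3 * m * t + 3 * m^2 * t + 3 * m^2 * t^2"
    using m t by (intro add_pos_nonneg) auto
  moreover have "-(-3 * \<kappa> * (1 + \<kappa>) * h^2 + 2 * (3 * \<kappa> + (1 + \<kappa>)^2) * h - 4 * (1 + \<kappa>))
      = (1 + m - 2 * t - m * t^2) + m * t * (1 + m - 2 * t)
        + ((m + 1)^2 + 3 * m * t + 3 * m^2 * t + 3 * m^2 * t^2)"
    unfolding \<kappa>h by (simp add: power2_eq_square algebra_simps)
  ultimately show ?thesis using Q by linarith
qed

lemma hopt_poly_continuous_on: "continuous_on A (hopt_poly \<kappa>)"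
  unfolding hopt_poly_def by (intro continuous_intros)

lemma hopt_poly_strict_antimono:
  assumes "\<kappa> \<le> 0" "1 \<le> x" "x < y" "y \<le> hbar \<kappa>"
  shows "hopt_poly \<kappa> y < hopt_poly \<kappa> x"
proof (rule DERIV_neg_imp_decreasing_open[OF \<open>x < y\<close>])
  fix z assume "x < z" "z < y"
  with assms have "0 \<le> hbar_poly \<kappa> z" by (intro hbar_poly_nonneg) auto
  with assms \<open>x < z\<close> show "\<exists>d. (hopt_poly \<kappa> has_real_derivative d) (at z) \<and> d < 0"
    using hopt_poly_has_real_derivative hopt_poly_derivative_neg by fastforce
qed (rule hopt_poly_continuous_on)

lemma kappabar_root: "2 * kappabar^2 + (9 + 5 * sqrt 5) * kappabar + 2 = 0"
proof -
  define t w where "t = sqrt (5::real)" and "w = sqrt (190 + 90 * t)"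
  have "2 * kappabar^2 + (9 + 5 * t) * kappabar + 2 = ((4 * kappabar + 9 + 5 * t)^2 - (9 + 5 * t)^2 + 16) / 8"
    by (simp add: field_simps power2_eq_square)
  also have "4 * kappabar + 9 + 5 * t = w" by (simp add: kappabar_def t_def w_def field_simps)
  also have "(w^2 - (9 + 5 * t)^2 + 16) / 8 = 0"
    by (simp add: w_def t_def power2_eq_square algebra_simps)
  finally show ?thesis by (simp add: t_def)
qed

lemma kappabar_bounds: "-1 < kappabar" "kappabar < 0"
proof -
  define t w where "t = sqrt (5::real)" and "w = sqrt (190 + 90 * t)"
  have t: "t^2 = 5" "0 < t" by (simp_all add: t_def)
  have kb: "kappabar = (-9 - 5 * t + w) / 4" by (simp add: kappabar_def t_def w_def)
  have "5 + 5 * t < w"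
    unfolding w_def using t by (intro real_less_rsqrt) (simp add: power2_eq_square algebra_simps)
  then show "-1 < kappabar" by (simp add: kb)
  have "w < 9 + 5 * t"
    unfolding w_def using t by (intro real_less_lsqrt) (simp_all add: power2_eq_square algebra_simps)
  then show "kappabar < 0" by (simp add: kb)
qed

lemma kappabar_quadratic_nonpos_iff:
  assumes "-1 < \<kappa>"
  shows "2 * \<kappa>^2 + (9 + 5 * sqrt 5) * \<kappa> + 2 \<le> 0 \<longleftrightarrow> \<kappa> \<le> kappabar"
proof -
  define B where "B = 9 + 5 * sqrt (5::real)"
  have "kappabar * (2 * \<kappa>^2 + B * \<kappa> + 2)
      = 2 * (\<kappa> - kappabar) * (kappabar * \<kappa> - 1) + \<kappa> * (2 * kappabar^2 + B * kappabar + 2)"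
    by (simp add: power2_eq_square algebra_simps)
  \<comment> \<open>so the other root is 1 / kappabar < -1\<close>
  then have factor: "kappabar * (2 * \<kappa>^2 + B * \<kappa> + 2) = 2 * (\<kappa> - kappabar) * (kappabar * \<kappa> - 1)"
    using kappabar_root by (simp add: B_def)
  have "kappabar * \<kappa> < 1"
  proof (cases "0 \<le> \<kappa>")
    case True
    then show ?thesis using mult_nonpos_nonneg[of kappabar \<kappa>] kappabar_bounds by linarith
  next
    case False
    then have "(- kappabar) * (- \<kappa>) < 1 * 1"
      using assms kappabar_bounds by (intro mult_strict_mono) auto
    then show ?thesis by simp
  qed
  have "2 * \<kappa>^2 + B * \<kappa> + 2 \<le> 0 \<longleftrightarrow> 0 \<le> kappabar * (2 * \<kappa>^2 + B * \<kappa> + 2)"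
    using kappabar_bounds by (simp add: zero_le_mult_iff)
  also have "\<dots> \<longleftrightarrow> \<kappa> \<le> kappabar"
    unfolding factor using \<open>kappabar * \<kappa> < 1\<close> by (simp add: zero_le_mult_iff)
  finally show ?thesis by (simp add: B_def)
qed

lemma hbar_scaled_le_iff:
  assumes "\<kappa> \<le> 0"
  shows "2 * (1 + \<kappa>) * hbar \<kappa> \<le> 5 - sqrt 5 \<longleftrightarrow> \<kappa> \<le> kappabar"
proof (cases "1 + \<kappa> \<le> 0")
  case True
  have "(1 + \<kappa>) * hbar \<kappa> \<le> 0"
    using True one_less_hbar[of \<kappa>] assms by (simp add: mult_nonpos_nonneg)
  moreover have "sqrt 5 < (5::real)" by (rule real_less_lsqrt) auto
  moreover have "\<kappa> \<le> kappabar" using True kappabar_bounds by linarith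
  ultimately show ?thesis by linarith
next
  case False
  define t s where "t = sqrt (5::real)" and "s = sqrt (1 - \<kappa> + \<kappa>^2)"
  have t: "t^2 = 5" "2 < t" "t < 5" unfolding t_def
    by (simp, (rule real_less_rsqrt, simp), (rule real_less_lsqrt, simp_all))
  have s: "s^2 = 1 - \<kappa> + \<kappa>^2" "0 \<le> s"
    unfolding s_def using one_minus_plus_sq_pos[of \<kappa>] by auto
  have d: "0 < 1 + \<kappa> + s" unfolding s_def by (rule hbar_denominator_pos)
  have hb: "hbar \<kappa> = 3 / (1 + \<kappa> + s)" by (simp add: hbar_def s_def)
  have "2 * (1 + \<kappa>) * hbar \<kappa> \<le> 5 - t \<longleftrightarrow> (1 + t) * (1 + \<kappa>) \<le> (5 - t) * s"
    using d unfolding hb by (simp add: field_simps)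
  also have "\<dots> \<longleftrightarrow> ((1 + t) * (1 + \<kappa>))^2 \<le> ((5 - t) * s)^2"
  proof -
    have "0 \<le> (1 + t) * (1 + \<kappa>)" "0 \<le> (5 - t) * s" using False t s by simp_all
    then show ?thesis by (metis abs_le_square_iff abs_of_nonneg)
  qed
  also have "\<dots> \<longleftrightarrow> 0 \<le> ((5 - t) * s)^2 - ((1 + t) * (1 + \<kappa>))^2" by simp
  also have "((5 - t) * s)^2 - ((1 + t) * (1 + \<kappa>))^2
      = - (6 * (t - 2) * (2 * \<kappa>^2 + (9 + 5 * t) * \<kappa> + 2))
        + 27 * \<kappa> * (t^2 - 5) + (5 - t)^2 * (s^2 - (1 - \<kappa> + \<kappa>^2))"
    by (simp add: power2_eq_square algebra_simps)
  also have "\<dots> = - (6 * (t - 2) * (2 * \<kappa>^2 + (9 + 5 * t) * \<kappa> + 2))"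
    using t(1) s(1) by simp
  also have "0 \<le> \<dots> \<longleftrightarrow> 2 * \<kappa>^2 + (9 + 5 * t) * \<kappa> + 2 \<le> 0"
    using t(2) by (simp add: mult_le_0_iff)
  also have "\<dots> \<longleftrightarrow> \<kappa> \<le> kappabar"
    using False kappabar_quadratic_nonpos_iff by (simp add: t_def)
  finally show ?thesis by (simp add: t_def)
qed

lemma hopt_poly_hbar_nonpos_iff:
  assumes "\<kappa> \<le> 0"
  shows "hopt_poly \<kappa> (hbar \<kappa>) \<le> 0 \<longleftrightarrow> \<kappa> \<le> kappabar"
proof -
  define u t where "u = (1 + \<kappa>) * hbar \<kappa>" and "t = sqrt (5::real)"
  have "t * t = 5" by (simp add: t_def)
  have "2 < t" unfolding t_def by (rule real_less_rsqrt) simp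
  have "hopt_poly \<kappa> (hbar \<kappa>) = 5 * u - u^2 - 5"
    unfolding u_def by (simp add: hopt_poly_via_hbar_poly hbar_poly_hbar)
  then have "4 * hopt_poly \<kappa> (hbar \<kappa>) = - ((2 * u - (5 - t)) * (2 * u - (5 + t)))"
    using \<open>t * t = 5\<close> by (simp add: power2_eq_square algebra_simps)
  then have "hopt_poly \<kappa> (hbar \<kappa>) \<le> 0 \<longleftrightarrow> 0 \<le> (2 * u - (5 - t)) * (2 * u - (5 + t))"
    by linarith
  also have "\<dots> \<longleftrightarrow> 2 * u \<le> 5 - t"
    using hbar_poly_nonneg_imp_le[OF assms, of "hbar \<kappa>"] \<open>2 < t\<close>
    by (simp add: zero_le_mult_iff hbar_poly_hbar u_def)
  finally have "hopt_poly \<kappa> (hbar \<kappa>) \<le> 0 \<longleftrightarrow> 2 * u \<le> 5 - t" .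
  then show ?thesis using hbar_scaled_le_iff[OF assms] unfolding u_def t_def mult.assoc by blast
qed

lemma hopt_poly_unique_root:
  assumes "\<kappa> \<le> kappabar"
  shows "\<exists>!h. h \<in> {1..hbar \<kappa>} \<and> hopt_poly \<kappa> h = 0"
proof -
  have \<kappa>: "\<kappa> \<le> 0" using assms kappabar_bounds by linarith
  have "hopt_poly \<kappa> (hbar \<kappa>) \<le> 0" using hopt_poly_hbar_nonpos_iff[OF \<kappa>] assms by simp
  then obtain r where r: "1 \<le> r" "r \<le> hbar \<kappa>" "hopt_poly \<kappa> r = 0"
    using IVT2'[of "hopt_poly \<kappa>" "hbar \<kappa>" 0 1] one_less_hbar[of \<kappa>] \<kappa>
    by (auto simp: hopt_poly_1 hopt_poly_continuous_on)
  show ?thesis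
  proof (rule ex1I[of _ r])
    show "r \<in> {1..hbar \<kappa>} \<and> hopt_poly \<kappa> r = 0" using r by simp
  next
    fix h assume "h \<in> {1..hbar \<kappa>} \<and> hopt_poly \<kappa> h = 0"
    then show "h = r"
      using r hopt_poly_strict_antimono[OF \<kappa>, of h r] hopt_poly_strict_antimono[OF \<kappa>, of r h]
      by (cases h r rule: linorder_cases) auto
  qed
qed

lemma hstar_sign_change:
  assumes "\<kappa> \<le> 0"
  shows "1 < hstar \<kappa>" "hstar \<kappa> \<le> hbar \<kappa>"
    and "\<And>h. 1 \<le> h \<Longrightarrow> h < hstar \<kappa> \<Longrightarrow> 0 < hopt_poly \<kappa> h"
    and "\<And>h. hstar \<kappa> < h \<Longrightarrow> h \<le> hbar \<kappa> \<Longrightarrow> hopt_poly \<kappa> h < 0"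
proof -
  have "1 < hstar \<kappa> \<and> hstar \<kappa> \<le> hbar \<kappa> \<and> 0 \<le> hopt_poly \<kappa> (hstar \<kappa>)
      \<and> (hstar \<kappa> < hbar \<kappa> \<longrightarrow> hopt_poly \<kappa> (hstar \<kappa>) = 0)" (is ?key)
  proof (cases "\<kappa> \<le> kappabar")
    case True
    then have "hstar \<kappa> \<in> {1..hbar \<kappa>} \<and> hopt_poly \<kappa> (hstar \<kappa>) = 0"
      unfolding hstar_def hopt_def using theI'[OF hopt_poly_unique_root[OF True]] by simp
    moreover from this have "hstar \<kappa> \<noteq> 1" using hopt_poly_1[of \<kappa>] by auto
    ultimately show ?thesis by auto
  next
    case False
    then show ?thesis
      using hopt_poly_hbar_nonpos_iff[OF assms] one_less_hbar[of \<kappa>] assms by (simp add: hstar_def)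
  qed
  then show "1 < hstar \<kappa>" "hstar \<kappa> \<le> hbar \<kappa>" by auto
  show "0 < hopt_poly \<kappa> h" if "1 \<le> h" "h < hstar \<kappa>" for h
    using that \<open>?key\<close> hopt_poly_strict_antimono[OF assms, of h "hstar \<kappa>"] by auto
  show "hopt_poly \<kappa> h < 0" if "hstar \<kappa> < h" "h \<le> hbar \<kappa>" for h
    using that \<open>?key\<close> hopt_poly_strict_antimono[OF assms, of "hstar \<kappa>" h] by auto
qed

definition pfun_long_step :: "real \<Rightarrow> real \<Rightarrow> real" where
  "pfun_long_step \<kappa> h = h * (2 - h) * (2 - \<kappa> * h) / (2 - (1 + \<kappa>) * h)"

lemma pfun_eq_pfun_long_step:
  assumes "\<kappa> \<noteq> 1" "1 \<le> h"
  shows "pfun h \<kappa> = pfun_long_step \<kappa> h"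
proof (cases "h = 1")
  case True
  have "1 - \<kappa> \<noteq> 0" using assms by simp
  then show ?thesis unfolding True pfun_def pfun_long_step_def by (simp add: field_simps)
qed (use assms in \<open>simp add: pfun_def pfun_long_step_def\<close>)

lemma pfun_long_step_has_real_derivative:
  assumes "(1 + \<kappa>) * h \<noteq> 2"
  shows "(pfun_long_step \<kappa> has_real_derivative 2 * hopt_poly \<kappa> h / (2 - (1 + \<kappa>) * h)^2) (at h)"
proof -
  have num: "((\<lambda>h. h * (2 - h) * (2 - \<kappa> * h))
      has_real_derivative 3 * \<kappa> * h^2 - 4 * (1 + \<kappa>) * h + 4) (at h)"
    by (auto intro!: derivative_eq_intros simp: power2_eq_square algebra_simps)
  have den: "((\<lambda>h. 2 - (1 + \<kappa>) * h) has_real_derivative - (1 + \<kappa>)) (at h)"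
    by (auto intro!: derivative_eq_intros)
  have "2 - (1 + \<kappa>) * h \<noteq> 0" using assms by simp
  from DERIV_divide[OF num den this] show ?thesis
    unfolding pfun_long_step_def [abs_def]
    by (simp add: hopt_poly_def power2_eq_square power3_eq_cube algebra_simps)
qed

lemma pfun_less_pfun_1:
  assumes "\<kappa> < 1" "0 < h" "h < 1"
  shows "pfun h \<kappa> < pfun 1 \<kappa>"
proof -
  define c where "c = - \<kappa> / (1 - \<kappa>)"
  have "c < 1" using assms(1) by (simp add: c_def field_simps)
  have "c * (1 + h) < 2"
  proof (cases "c \<le> 0")
    case True
    then show ?thesis using assms mult_nonpos_nonneg[of c "1 + h"] by linarith
  next
    case False
    then have "c * (1 + h) < 1 + h" using mult_strict_right_mono[of c 1 "1 + h"] \<open>c < 1\<close> assms by simp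
    then show ?thesis using assms by linarith
  qed
  then have "0 < (1 - h) * (2 - c * (1 + h))" using assms by (intro mult_pos_pos) auto
  moreover have "pfun 1 \<kappa> - pfun h \<kappa> = (1 - h) * (2 - c * (1 + h))"
    using assms unfolding pfun_def c_def [symmetric] by (simp add: power2_eq_square algebra_simps)
  ultimately show ?thesis by linarith
qed

lemma strict_max_of_DERIV_sign_change:
  fixes f f' :: "real \<Rightarrow> real"
  assumes deriv: "\<And>x. a \<le> x \<Longrightarrow> x \<le> b \<Longrightarrow> (f has_real_derivative f' x) (at x)"
    and pos: "\<And>x. a \<le> x \<Longrightarrow> x < c \<Longrightarrow> 0 < f' x"
    and neg: "\<And>x. c < x \<Longrightarrow> x \<le> b \<Longrightarrow> f' x < 0"
    and "a \<le> x" "x \<le> b" "x \<noteq> c" "a \<le> c" "c \<le> b"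
  shows "f x < f c"
proof -
  have "isCont f y" if "a \<le> y" "y \<le> b" for y
    using deriv[OF that] by (rule DERIV_isCont)
  then have cont: "continuous_on {y..z} f" if "a \<le> y" "z \<le> b" for y z
    using that by (intro continuous_at_imp_continuous_on) auto
  consider "x < c" | "c < x" using \<open>x \<noteq> c\<close> by linarith
  then show ?thesis
  proof cases
    case 1
    show ?thesis
    proof (rule DERIV_pos_imp_increasing_open[OF 1 _ cont])
      fix y assume "x < y" "y < c"
      with assms show "\<exists>d. (f has_real_derivative d) (at y) \<and> 0 < d"
        by (intro exI[of _ "f' y"] conjI deriv pos) auto
    qed (use assms in auto)
  next
    case 2
    show ?thesis
    proof (rule DERIV_neg_imp_decreasing_open[OF 2 _ cont])
      fix y assume "c < y" "y < x"
      with assms show "\<exists>d. (f has_real_derivative d) (at y) \<and> d < 0"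
        by (intro exI[of _ "f' y"] conjI deriv neg) auto
    qed (use assms in auto)
  qed
qed

lemma pfun_less_pfun_hstar:
  assumes "\<kappa> \<le> 0" "0 < h" "h \<le> hbar \<kappa>" "h \<noteq> hstar \<kappa>"
  shows "pfun h \<kappa> < pfun (hstar \<kappa>) \<kappa>"
proof -
  note hstar = hstar_sign_change[OF assms(1)]
  have denom: "(1 + \<kappa>) * y \<le> 3/2" if "1 \<le> y" "y \<le> hbar \<kappa>" for y
    using assms(1) that by (intro hbar_poly_nonneg_imp_le hbar_poly_nonneg) auto
  have long_step_less: "pfun_long_step \<kappa> x < pfun_long_step \<kappa> (hstar \<kappa>)"
    if "1 \<le> x" "x \<le> hbar \<kappa>" "x \<noteq> hstar \<kappa>" for x
  proof (rule strict_max_of_DERIV_sign_change[where f = "pfun_long_step \<kappa>" and c = "hstar \<kappa>"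
        and a = 1 and b = "hbar \<kappa>" and f' = "\<lambda>x. 2 * hopt_poly \<kappa> x / (2 - (1 + \<kappa>) * x)^2"])
    fix y assume "1 \<le> y" "y \<le> hbar \<kappa>"
    with denom show "(pfun_long_step \<kappa> has_real_derivative 2 * hopt_poly \<kappa> y / (2 - (1 + \<kappa>) * y)^2) (at y)"
      by (intro pfun_long_step_has_real_derivative) fastforce
  next
    fix y assume "1 \<le> y" "y < hstar \<kappa>"
    then show "0 < 2 * hopt_poly \<kappa> y / (2 - (1 + \<kappa>) * y)^2"
      using hstar denom[of y] by (intro divide_pos_pos) auto
  next
    fix y assume "hstar \<kappa> < y" "y \<le> hbar \<kappa>"
    then show "2 * hopt_poly \<kappa> y / (2 - (1 + \<kappa>) * y)^2 < 0"
      using hstar denom[of y] by (intro divide_neg_pos) auto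
  qed (use that hstar in auto)
  show ?thesis
  proof (cases "h < 1")
    case True
    have "pfun h \<kappa> < pfun 1 \<kappa>" using True assms by (intro pfun_less_pfun_1) auto
    also have "\<dots> = pfun_long_step \<kappa> 1" using assms by (intro pfun_eq_pfun_long_step) auto
    also have "\<dots> < pfun_long_step \<kappa> (hstar \<kappa>)" using hstar by (intro long_step_less) auto
    finally show ?thesis using hstar assms by (simp add: pfun_eq_pfun_long_step)
  next
    case False
    then show ?thesis using long_step_less[of h] hstar assms by (simp add: pfun_eq_pfun_long_step)
  qed
qed

theorem proposition4p6:
  fixes L \<mu> \<kappa> :: real
  assumes "L > 0" and "\<mu> \<le> 0" and "\<kappa> = \<mu> / L"
  shows "(\<kappa> \<le> kappabar \<longrightarrow> (\<exists>!h. h \<in> {1..hbar \<kappa>} \<and> hopt_poly \<kappa> h = 0))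
    \<and> hstar \<kappa> \<in> {0<..hbar \<kappa>}
    \<and> (\<forall>h \<in> {0<..hbar \<kappa>}. pfun h \<kappa> \<le> pfun (hstar \<kappa>) \<kappa>)
    \<and> (\<forall>h \<in> {0<..hbar \<kappa>}. pfun h \<kappa> = pfun (hstar \<kappa>) \<kappa> \<longrightarrow> h = hstar \<kappa>)"
proof -
  have \<kappa>: "\<kappa> \<le> 0" using assms by (simp add: divide_nonpos_pos)
  have less: "pfun h \<kappa> < pfun (hstar \<kappa>) \<kappa>" if "h \<in> {0<..hbar \<kappa>}" "h \<noteq> hstar \<kappa>" for h
    using pfun_less_pfun_hstar[OF \<kappa>] that by simp
  show ?thesis
  proof (intro conjI)
    show "\<kappa> \<le> kappabar \<longrightarrow> (\<exists>!h. h \<in> {1..hbar \<kappa>} \<and> hopt_poly \<kappa> h = 0)"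
      using hopt_poly_unique_root by blast
    show "hstar \<kappa> \<in> {0<..hbar \<kappa>}" using hstar_sign_change(1,2)[OF \<kappa>] by simp
    show "\<forall>h \<in> {0<..hbar \<kappa>}. pfun h \<kappa> \<le> pfun (hstar \<kappa>) \<kappa>"
      using less by (metis order.order_iff_strict)
    show "\<forall>h \<in> {0<..hbar \<kappa>}. pfun h \<kappa> = pfun (hstar \<kappa>) \<kappa> \<longrightarrow> h = hstar \<kappa>"
      using less by fastforce
  qed
qed

end
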